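(* For all $\Gamma\subseteq\{0,1\}^\infty$, $$\dim_H(\Gamma)=\inf \mathscr G(\Gamma),$$ where $\mathscr G(\Gamma)=\{s\in(0,\infty) : \text{there exists a learning function } l \text{ which } s\text{-learns every } X\in\Gamma\}$.
   Context: $\dim_H$ denotes the Hausdorff dimension on the Cantor space $\{0,1\}^\infty$ (with respect to the standard metric, equivalently defined via covers by cylinders $C_w=\{Y: w\sqsubseteq Y\}$ with weight $2^{-s|w|}$). A learning function is a function $l:\{0,1\}^*\to\{0,1\}$ (identifying yes with $1$ and no with $0$). $Y\upharpoonright i$ is the length-$i$ prefix of $Y$; $\lambda$ is the uniform (Lebesgue) measure on $\{0,1\}^\infty$. For a nonempty string $w$, the path average is $\mathrm{AVG}_l(w)=\frac{1}{|w|}\sum_{i=0}^{|w|} l(w\upharpoonright i)$. A learning function $l$ satisfies the measure condition if for all $n\in\mathbb N$, $\lambda(\{Y\in\{0,1\}^\infty : \#\{i\in\mathbb N: l(Y\upharpoonright i)=1\}\ge n\})\le 2^{-n}$. For $s\ge0$, $l$ $s$-learns $X$ iff $l$ satisfies the measure condition and $\limsup_{n\to\infty}\mathrm{AVG}_l(X\upharpoonright n)\ge 1-s$ (no computability restriction on $l$). *)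

theory Defs
  imports "HOL-Probability.Probability"
begin

text \<open>Cantor space: infinite binary sequences as nat \<Rightarrow> bool; strings as bool lists
  (True = 1 = yes, False = 0 = no).\<close>

definition pref :: "(nat \<Rightarrow> bool) \<Rightarrow> nat \<Rightarrow> bool list" where
  "pref Y n = map Y [0..<n]"

definition cyl :: "bool list \<Rightarrow> (nat \<Rightarrow> bool) set" where
  "cyl w = {Y. pref Y (length w) = w}"

definition hausdorff_pre :: "real \<Rightarrow> nat \<Rightarrow> (nat \<Rightarrow> bool) set \<Rightarrow> ennreal" where
  "hausdorff_pre s n \<Gamma> = (INF W \<in> {W :: nat \<Rightarrow> bool list.
        (\<forall>k. n \<le> length (W k)) \<and> \<Gamma> \<subseteq> (\<Union>k. cyl (W k))}.
        (\<Sum>k. ennreal (2 powr (- s * real (length (W k))))))"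

definition hausdorff_measure :: "real \<Rightarrow> (nat \<Rightarrow> bool) set \<Rightarrow> ennreal" where
  "hausdorff_measure s \<Gamma> = (SUP n. hausdorff_pre s n \<Gamma>)"

definition dimH :: "(nat \<Rightarrow> bool) set \<Rightarrow> real" where
  "dimH \<Gamma> = Inf {s. 0 \<le> s \<and> hausdorff_measure s \<Gamma> = 0}"

definition unif :: "(nat \<Rightarrow> bool) measure" where
  "unif = PiM UNIV (\<lambda>_. measure_pmf (bernoulli_pmf (1/2)))"

definition measure_condition :: "(bool list \<Rightarrow> bool) \<Rightarrow> bool" where
  "measure_condition l \<longleftrightarrow>
     (\<forall>n::nat. emeasure unif
        {Y. infinite {i. l (pref Y i)} \<or> n \<le> card {i. l (pref Y i)}}
        \<le> ennreal ((1/2) ^ n))"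

definition AVG :: "(bool list \<Rightarrow> bool) \<Rightarrow> bool list \<Rightarrow> real" where
  "AVG l w = (1 / real (length w)) * (\<Sum>i\<in>{0..length w}. (if l (take i w) then 1 else 0))"

definition learns :: "(bool list \<Rightarrow> bool) \<Rightarrow> real \<Rightarrow> (nat \<Rightarrow> bool) \<Rightarrow> bool" where
  "learns l s X \<longleftrightarrow> measure_condition l \<and>
     limsup (\<lambda>n. ereal (AVG l (pref X n))) \<ge> ereal (1 - s)"

definition learnset :: "(nat \<Rightarrow> bool) set \<Rightarrow> real set" where
  "learnset \<Gamma> = {s. 0 < s \<and> (\<exists>l. \<forall>X\<in>\<Gamma>. learns l s X)}"

end

theory Submission
  imports Defs
begin

text \<open>If a learning function \<open>s\<close>-learns every \<open>X \<in> \<Gamma>\<close> and \<open>s < r < t\<close>, then every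
  \<open>X \<in> \<Gamma>\<close> has infinitely many prefixes \<open>X\<restriction>N\<close> along which the learner says yes at least
  \<open>(1 - r) N\<close> times. By the measure condition at most \<open>2^(rN)\<close> strings of length \<open>N\<close> have
  this property, so the long ones cover \<open>\<Gamma>\<close> with \<open>t\<close>-dimensional weight at most
  \<open>\<Sum>N\<ge>M. 2^((r - t) N)\<close>, which tends to \<open>0\<close>; hence \<open>\<Gamma>\<close> is \<open>H\<^sup>t\<close>-null.

  Conversely, covers witnessing \<open>H\<^sup>t(\<Gamma>) = 0\<close> add up to a martingale \<open>d\<close> with
  \<open>d([]) \<le> 1\<close> that reaches \<open>2^((1 - t) N)\<close> on infinitely many prefixes \<open>X\<restriction>N\<close> of every
  \<open>X \<in> \<Gamma>\<close>. The learner that says yes whenever \<open>d\<close> reaches the next power of two then says yes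
  about \<open>(1 - t) N\<close> times along such a prefix, and it satisfies the measure condition by Ville's
  inequality. So the \<open>t\<close> with \<open>H\<^sup>t(\<Gamma>) = 0\<close> and the learnable \<open>t\<close> have the same infimum.\<close>

lemma powr_two_minus: "2 powr (- real n) = (1/2 :: real) ^ n"
  by (simp add: powr_minus powr_realpow power_one_over inverse_eq_divide)

lemma two_powr_neg_le_half_power:
  assumes "0 < t" and "real K / t \<le> real L"
  shows "2 powr (- t * real L) \<le> (1/2) ^ K"
proof -
  have "real K \<le> t * real L"
    using assms by (simp add: pos_divide_le_eq mult.commute)
  then have "2 powr (- t * real L) \<le> 2 powr (- real K)"
    by (intro powr_mono) auto
  then show ?thesis
    by (simp only: powr_two_minus)
qed

lemma ennreal_power_two: "(2 :: ennreal) ^ n = ennreal (2 ^ n)"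
  by (metis ennreal_numeral ennreal_power zero_le_numeral)

lemma ennreal_le_suminf: "f i \<le> (\<Sum>k. f k :: ennreal)"
  using sum_le_suminf[OF summableI, of "{i}" f] by simp

lemma suminf_ennreal_geometric:
  assumes "0 \<le> q" and "q < 1"
  shows "(\<Sum>k. ennreal (q ^ (k + M))) = ennreal (q ^ M / (1 - q))"
proof (rule suminf_ennreal_eq)
  show "(\<lambda>k. q ^ (k + M)) sums (q ^ M / (1 - q))"
    using sums_mult2[OF geometric_sums[of q], of "q ^ M"] assms by (simp add: power_add divide_inverse mult.commute)
qed (use assms in simp)

lemma ereal_le_Limsup_iff:
  "ereal c \<le> Limsup F (\<lambda>x. ereal (f x)) \<longleftrightarrow> (\<forall>e>0. \<exists>\<^sub>F x in F. c - e < f x)"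
proof
  assume le: "ereal c \<le> Limsup F (\<lambda>x. ereal (f x))"
  show "\<forall>e>0. \<exists>\<^sub>F x in F. c - e < f x"
  proof (intro allI impI, rule ccontr)
    fix e :: real
    assume "0 < e" and "\<not> (\<exists>\<^sub>F x in F. c - e < f x)"
    then have "eventually (\<lambda>x. ereal (f x) \<le> ereal (c - e)) F"
      by (simp add: not_frequently not_less)
    then have "Limsup F (\<lambda>x. ereal (f x)) \<le> ereal (c - e)"
      by (rule Limsup_bounded)
    with le have "ereal c \<le> ereal (c - e)"
      by (rule order_trans)
    with \<open>0 < e\<close> show False
      by simp
  qed
next
  assume freq: "\<forall>e>0. \<exists>\<^sub>F x in F. c - e < f x"
  show "ereal c \<le> Limsup F (\<lambda>x. ereal (f x))"
  proof (rule ccontr)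
    assume "\<not> ereal c \<le> Limsup F (\<lambda>x. ereal (f x))"
    then obtain z where z: "Limsup F (\<lambda>x. ereal (f x)) < ereal z" "ereal z < ereal c"
      using ereal_dense2[of "Limsup F (\<lambda>x. ereal (f x))" "ereal c"] by (auto simp: not_le)
    from z(1) have "eventually (\<lambda>x. \<not> c - (c - z) < f x) F"
      by (rule eventually_mono[OF Limsup_lessD]) simp
    moreover have "\<exists>\<^sub>F x in F. c - (c - z) < f x"
      by (rule freq[rule_format]) (use z(2) in simp)
    ultimately show False
      unfolding frequently_def by blast
  qed
qed

lemma cInf_le_cInf_if_above_mem:
  fixes A B :: "real set"
  assumes "A \<noteq> {}" and "bdd_below B" and "\<And>a x. a \<in> A \<Longrightarrow> a < x \<Longrightarrow> x \<in> B"
  shows "Inf B \<le> Inf A"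
proof (rule cInf_greatest[OF assms(1)])
  fix a
  assume "a \<in> A"
  show "Inf B \<le> a"
  proof (rule field_le_epsilon)
    fix e :: real
    assume "0 < e"
    with \<open>a \<in> A\<close> assms(3) have "a + e \<in> B"
      by simp
    then show "Inf B \<le> a + e"
      using assms(2) by (rule cInf_lower)
  qed
qed

section \<open>Cylinders and the uniform measure\<close>

lemma length_pref [simp]: "length (pref Y n) = n"
  by (simp add: pref_def)

lemma take_pref: "j \<le> n \<Longrightarrow> take j (pref Y n) = pref Y j"
  by (simp add: pref_def take_map)

lemma mem_cyl_iff: "Y \<in> cyl w \<longleftrightarrow> (\<forall>i<length w. Y i = w ! i)"
  unfolding cyl_def pref_def list_eq_iff_nth_eq by simp

lemma mem_cyl_pref [simp]: "X \<in> cyl (pref X n)"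
  by (simp add: cyl_def)

lemma cyl_Nil [simp]: "cyl [] = UNIV"
  by (auto simp: mem_cyl_iff)

lemma mem_cyl_snoc: "Y \<in> cyl (u @ [b]) \<longleftrightarrow> Y \<in> cyl u \<and> Y (length u) = b"
  by (auto simp: mem_cyl_iff nth_append less_Suc_eq)

lemma cyl_eq_prod_emb:
  "cyl w = prod_emb UNIV (\<lambda>_. measure_pmf (bernoulli_pmf (1/2))) {..<length w}
     (Pi\<^sub>E {..<length w} (\<lambda>i. {w ! i}))"
proof (rule set_eqI)
  fix Y :: "nat \<Rightarrow> bool"
  have "Y \<in> prod_emb UNIV (\<lambda>_. measure_pmf (bernoulli_pmf (1/2))) {..<length w}
      (Pi\<^sub>E {..<length w} (\<lambda>i. {w ! i})) \<longleftrightarrow> (\<forall>i<length w. Y i = w ! i)"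
    unfolding prod_emb_def
    by (simp add: space_PiM PiE_iff del: ball_simps) (simp only: Ball_def lessThan_iff)
  then show "Y \<in> cyl w \<longleftrightarrow> Y \<in> prod_emb UNIV (\<lambda>_. measure_pmf (bernoulli_pmf (1/2))) {..<length w}
      (Pi\<^sub>E {..<length w} (\<lambda>i. {w ! i}))"
    by (simp add: mem_cyl_iff)
qed

lemma sets_cyl [simp]: "cyl w \<in> sets unif"
  unfolding cyl_eq_prod_emb unif_def by (intro sets_PiM_I) auto

lemma emeasure_cyl: "emeasure unif (cyl w) = ennreal ((1/2) ^ length w)"
proof -
  have "emeasure unif (cyl w) =
      (\<Prod>i<length w. emeasure (measure_pmf (bernoulli_pmf (1/2))) {w ! i})"
    unfolding cyl_eq_prod_emb unif_def
    by (rule emeasure_PiM_emb) (auto intro: prob_space_measure_pmf)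
  also have "\<dots> = (\<Prod>i<length w. ennreal (1/2))"
    by (intro prod.cong refl) (auto simp: emeasure_pmf_single)
  also have "\<dots> = ennreal ((1/2) ^ length w)"
    by (simp add: prod_ennreal ennreal_power del: ennreal_half)
  finally show ?thesis .
qed

lemma finite_lists_length: "finite {v :: bool list. length v = n}"
  using finite_lists_length_eq[of "UNIV :: bool set" n] by simp

lemma card_lists_length: "card {v :: bool list. length v = n} = 2 ^ n"
  using card_lists_length_eq[of "UNIV :: bool set" n] by simp

lemma sum_lists_length_Suc:
  fixes f :: "bool list \<Rightarrow> 'a :: comm_monoid_add"
  shows "(\<Sum>v | length v = Suc n. f v) =
    (\<Sum>v | length v = n. f (True # v)) + (\<Sum>v | length v = n. f (False # v))"
proof -
  have "{v :: bool list. length v = Suc n} =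
      Cons True ` {v. length v = n} \<union> Cons False ` {v. length v = n}"
    by (auto simp: length_Suc_conv image_iff)
  then have "(\<Sum>v | length v = Suc n. f v) =
      sum f (Cons True ` {v. length v = n} \<union> Cons False ` {v. length v = n})"
    by simp
  also have "\<dots> = sum f (Cons True ` {v. length v = n}) + sum f (Cons False ` {v. length v = n})"
    by (rule sum.union_disjoint) (auto simp: finite_lists_length)
  finally show ?thesis
    by (simp add: sum.reindex)
qed

section \<open>Counting yes answers and the measure condition\<close>

definition yes_count :: "(bool list \<Rightarrow> bool) \<Rightarrow> bool list \<Rightarrow> nat" where
  "yes_count l v = card {j. j \<le> length v \<and> l (take j v)}"

definition yes_strings :: "(bool list \<Rightarrow> bool) \<Rightarrow> nat \<Rightarrow> nat \<Rightarrow> bool list set" where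
  "yes_strings l n i = {v. length v = i \<and> n \<le> yes_count l v}"

lemma yes_count_Nil: "yes_count l [] = (if l [] then 1 else 0)"
proof -
  have "{j. j \<le> 0 \<and> l (take j [])} = (if l [] then {0} else {})"
    by auto
  then show ?thesis
    by (simp add: yes_count_def)
qed

lemma yes_count_snoc: "yes_count l (u @ [b]) = yes_count l u + (if l (u @ [b]) then 1 else 0)"
proof -
  have "{j. j \<le> length (u @ [b]) \<and> l (take j (u @ [b]))} =
      {j. j \<le> length u \<and> l (take j u)} \<union> (if l (u @ [b]) then {Suc (length u)} else {})"
    by (auto simp: le_Suc_eq)
  then show ?thesis
    by (auto simp: yes_count_def)
qed

lemma yes_count_pref: "yes_count l (pref Y i) = card ({j. l (pref Y j)} \<inter> {..i})"
  unfolding yes_count_def by (rule arg_cong[where f = card]) (auto simp: take_pref)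

lemma AVG_eq_yes_count: "AVG l w = real (yes_count l w) / real (length w)"
proof -
  have "{0..length w} \<inter> {i. l (take i w)} = {j. j \<le> length w \<and> l (take j w)}"
    by auto
  then show ?thesis
    by (simp add: AVG_def yes_count_def sum.If_cases)
qed

lemma finite_yes_strings: "finite (yes_strings l n i)"
  by (rule finite_subset[OF _ finite_lists_length[of i]]) (auto simp: yes_strings_def)

lemma infinite_or_card_ge_iff:
  fixes S :: "nat set"
  shows "infinite S \<or> n \<le> card S \<longleftrightarrow> (\<exists>i. n \<le> card (S \<inter> {..i}))"
proof
  assume "infinite S \<or> n \<le> card S"
  then obtain T where T: "T \<subseteq> S" "finite T" "card T = n"
    by (metis infinite_arbitrarily_large obtain_subset_with_card_n)
  then obtain i where "T \<subseteq> {..i}"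
    by (auto simp: finite_nat_iff_bounded_le)
  with T have "card T \<le> card (S \<inter> {..i})"
    by (intro card_mono) auto
  with T show "\<exists>i. n \<le> card (S \<inter> {..i})"
    by auto
next
  assume "\<exists>i. n \<le> card (S \<inter> {..i})"
  then show "infinite S \<or> n \<le> card S"
    by (meson card_mono inf_le1 le_trans)
qed

lemma yes_event_eq_cyls: "{Y. n \<le> yes_count l (pref Y i)} = (\<Union>v\<in>yes_strings l n i. cyl v)"
  by (auto simp: yes_strings_def cyl_def)

lemma emeasure_yes_event:
  "emeasure unif {Y. n \<le> yes_count l (pref Y i)} = of_nat (card (yes_strings l n i)) * ennreal ((1/2) ^ i)"
proof -
  have "disjoint_family_on cyl (yes_strings l n i)"
    by (auto simp: disjoint_family_on_def yes_strings_def cyl_def)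
  then have "emeasure unif (\<Union>v\<in>yes_strings l n i. cyl v) = (\<Sum>v\<in>yes_strings l n i. emeasure unif (cyl v))"
    by (intro sum_emeasure[symmetric]) (auto simp: finite_yes_strings)
  also have "\<dots> = (\<Sum>v\<in>yes_strings l n i. ennreal ((1/2) ^ i))"
    by (intro sum.cong refl) (auto simp: emeasure_cyl yes_strings_def)
  finally show ?thesis
    by (simp add: yes_event_eq_cyls)
qed

lemma measure_condition_event_eq_UN:
  "{Y. infinite {i. l (pref Y i)} \<or> n \<le> card {i. l (pref Y i)}} = (\<Union>i. {Y. n \<le> yes_count l (pref Y i)})"
  using infinite_or_card_ge_iff[of "{i. l (pref Y i)}" n for Y] by (auto simp: yes_count_pref)

lemma emeasure_measure_condition_event:
  "emeasure unif {Y. infinite {i. l (pref Y i)} \<or> n \<le> card {i. l (pref Y i)}} =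
    (SUP i. of_nat (card (yes_strings l n i)) * ennreal ((1/2) ^ i))"
proof -
  have "yes_count l (pref Y i) \<le> yes_count l (pref Y (Suc i))" for Y i
    unfolding yes_count_pref by (intro card_mono) auto
  then have "incseq (\<lambda>i. {Y. n \<le> yes_count l (pref Y i)})"
    by (intro incseq_SucI) (auto intro: order_trans)
  moreover have "{Y. n \<le> yes_count l (pref Y i)} \<in> sets unif" for i
    unfolding yes_event_eq_cyls by (intro sets.finite_UN finite_yes_strings) simp
  ultimately have "(SUP i. emeasure unif {Y. n \<le> yes_count l (pref Y i)}) =
      emeasure unif (\<Union>i. {Y. n \<le> yes_count l (pref Y i)})"
    by (intro SUP_emeasure_incseq) auto
  then show ?thesis
    unfolding measure_condition_event_eq_UN by (simp add: emeasure_yes_event)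
qed

lemma measure_condition_iff_card:
  "measure_condition l \<longleftrightarrow> (\<forall>n i. 2 ^ n * card (yes_strings l n i) \<le> (2::nat) ^ i)"
proof -
  have level: "of_nat (card (yes_strings l n i)) * ennreal ((1/2) ^ i) \<le> ennreal ((1/2) ^ n)
      \<longleftrightarrow> 2 ^ n * card (yes_strings l n i) \<le> (2::nat) ^ i" for n i
  proof -
    have "of_nat (card (yes_strings l n i)) * ennreal ((1/2) ^ i) =
        ennreal (real (card (yes_strings l n i)) * (1/2) ^ i)"
      by (simp add: ennreal_mult ennreal_of_nat_eq_real_of_nat)
    then have "of_nat (card (yes_strings l n i)) * ennreal ((1/2) ^ i) \<le> ennreal ((1/2) ^ n)
        \<longleftrightarrow> real (card (yes_strings l n i)) * (1/2) ^ i \<le> (1/2) ^ n"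
      by (simp add: ennreal_le_iff)
    also have "\<dots> \<longleftrightarrow> real (2 ^ n * card (yes_strings l n i)) \<le> real (2 ^ i)"
      by (simp add: field_simps power_divide)
    finally show ?thesis
      by linarith
  qed
  show ?thesis
    unfolding measure_condition_def emeasure_measure_condition_event SUP_le_iff level by blast
qed

section \<open>Supermartingales and Ville's inequality\<close>

definition supermartingale :: "(bool list \<Rightarrow> ennreal) \<Rightarrow> bool" where
  "supermartingale d \<longleftrightarrow> (\<forall>u. d (u @ [True]) + d (u @ [False]) \<le> 2 * d u)"

lemma supermartingale_snoc_le:
  assumes "supermartingale d"
  shows "d (u @ [b]) \<le> 2 * d u"
proof -
  have "d (u @ [b]) \<le> d (u @ [True]) + d (u @ [False])"
    by (cases b) (simp_all add: add_increasing add_increasing2)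
  with assms show ?thesis
    unfolding supermartingale_def by (blast intro: order_trans)
qed

lemma supermartingale_sum_extensions:
  assumes "supermartingale d"
  shows "(\<Sum>v | length v = n. d (u @ v)) \<le> 2 ^ n * d u"
proof (induction n arbitrary: u)
  case 0
  then show ?case
    by simp
next
  case (Suc n)
  have "(\<Sum>v | length v = Suc n. d (u @ v)) =
      (\<Sum>v | length v = n. d ((u @ [True]) @ v)) + (\<Sum>v | length v = n. d ((u @ [False]) @ v))"
    by (simp add: sum_lists_length_Suc)
  also have "\<dots> \<le> 2 ^ n * (d (u @ [True]) + d (u @ [False]))"
    using Suc.IH[of "u @ [True]"] Suc.IH[of "u @ [False]"] by (simp add: distrib_left add_mono)
  also have "\<dots> \<le> 2 ^ n * (2 * d u)"
    using assms by (intro mult_left_mono) (auto simp: supermartingale_def)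
  finally show ?case
    by (simp add: mult_ac)
qed

definition reaches :: "ennreal \<Rightarrow> (bool list \<Rightarrow> ennreal) \<Rightarrow> bool list \<Rightarrow> bool" where
  "reaches c d v \<longleftrightarrow> (\<exists>j\<le>length v. c \<le> d (take j v))"

definition stopped_at :: "ennreal \<Rightarrow> (bool list \<Rightarrow> ennreal) \<Rightarrow> bool list \<Rightarrow> ennreal" where
  "stopped_at c d v = (if reaches c d v then c else d v)"

lemma reaches_Nil: "reaches c d [] \<longleftrightarrow> c \<le> d []"
  by (simp add: reaches_def)

lemma reaches_snoc: "reaches c d (u @ [b]) \<longleftrightarrow> reaches c d u \<or> c \<le> d (u @ [b])"
  by (auto simp: reaches_def le_Suc_eq)

lemma supermartingale_stopped_at:
  assumes "supermartingale d"
  shows "supermartingale (stopped_at c d)"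
  unfolding supermartingale_def
proof
  fix u
  show "stopped_at c d (u @ [True]) + stopped_at c d (u @ [False]) \<le> 2 * stopped_at c d u"
  proof (cases "reaches c d u")
    case True
    then show ?thesis
      by (simp add: stopped_at_def reaches_snoc mult_2)
  next
    case False
    have "stopped_at c d (u @ [b]) \<le> d (u @ [b])" for b
      using False by (auto simp: stopped_at_def reaches_snoc)
    then have "stopped_at c d (u @ [True]) + stopped_at c d (u @ [False]) \<le> d (u @ [True]) + d (u @ [False])"
      by (intro add_mono)
    also have "\<dots> \<le> 2 * d u"
      using assms by (simp add: supermartingale_def)
    finally show ?thesis
      using False by (simp add: stopped_at_def)
  qed
qed

lemma ville_inequality:
  assumes "supermartingale d"
  shows "of_nat (card {v. length v = n \<and> reaches c d v}) * c \<le> 2 ^ n * d []"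
proof -
  have "of_nat (card {v. length v = n \<and> reaches c d v}) * c =
      (\<Sum>v | length v = n \<and> reaches c d v. stopped_at c d v)"
    by (simp add: stopped_at_def)
  also have "\<dots> \<le> (\<Sum>v | length v = n. stopped_at c d v)"
    by (intro sum_mono2 finite_lists_length) auto
  also have "\<dots> \<le> 2 ^ n * stopped_at c d []"
    using supermartingale_sum_extensions[OF supermartingale_stopped_at[OF assms, of c], where n = n and u = "[]"]
    by simp
  also have "\<dots> \<le> 2 ^ n * d []"
    by (intro mult_left_mono) (simp_all add: stopped_at_def reaches_Nil)
  finally show ?thesis .
qed

lemma supermartingale_cmult:
  assumes "supermartingale d"
  shows "supermartingale (\<lambda>u. c * d u)"
  unfolding supermartingale_def
proof
  fix u
  have "c * (d (u @ [True]) + d (u @ [False])) \<le> c * (2 * d u)"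
    using assms by (intro mult_left_mono) (auto simp: supermartingale_def)
  then show "c * d (u @ [True]) + c * d (u @ [False]) \<le> 2 * (c * d u)"
    by (simp add: distrib_left mult.left_commute)
qed

lemma supermartingale_suminf:
  assumes "\<And>i. supermartingale (d i)"
  shows "supermartingale (\<lambda>u. \<Sum>i. d i u)"
  unfolding supermartingale_def
proof
  fix u
  have "(\<Sum>i. d i (u @ [True])) + (\<Sum>i. d i (u @ [False])) = (\<Sum>i. d i (u @ [True]) + d i (u @ [False]))"
    by (rule suminf_add) (auto intro: summableI)
  also have "\<dots> \<le> (\<Sum>i. 2 * d i u)"
    using assms by (intro suminf_le) (auto simp: supermartingale_def intro: summableI)
  finally show "(\<Sum>i. d i (u @ [True])) + (\<Sum>i. d i (u @ [False])) \<le> 2 * (\<Sum>i. d i u)"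
    by simp
qed

section \<open>The savings learner of a supermartingale\<close>

text \<open>The savings learner says yes at \<open>u\<close> when \<open>d u\<close> reaches \<open>2^(k + 1)\<close>, where \<open>k\<close> is the
  number of yes answers at proper prefixes of \<open>u\<close>; this count recurses on the last letter,
  hence on the head of the reversed string.\<close>

primrec savings_level_rev :: "(bool list \<Rightarrow> ennreal) \<Rightarrow> bool list \<Rightarrow> nat" where
  "savings_level_rev d [] = 0"
| "savings_level_rev d (b # r) = savings_level_rev d r +
     (if 2 ^ (savings_level_rev d r + 1) \<le> d (rev (b # r)) then 1 else 0)"

definition savings_learner :: "(bool list \<Rightarrow> ennreal) \<Rightarrow> bool list \<Rightarrow> bool" where
  "savings_learner d u \<longleftrightarrow> u \<noteq> [] \<and> 2 ^ (savings_level_rev d (rev (butlast u)) + 1) \<le> d u"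

lemma yes_count_savings_learner: "yes_count (savings_learner d) u = savings_level_rev d (rev u)"
  by (induction u rule: rev_induct) (simp_all add: yes_count_Nil yes_count_snoc savings_learner_def)

lemma savings_learner_snoc:
  "savings_learner d (u @ [b]) \<longleftrightarrow> 2 ^ (yes_count (savings_learner d) u + 1) \<le> d (u @ [b])"
  by (simp add: savings_learner_def yes_count_savings_learner)

lemma reaches_yes_count_savings_learner:
  assumes "1 \<le> k" and "k \<le> yes_count (savings_learner d) u"
  shows "reaches (2 ^ k) d u"
  using assms
proof (induction u rule: rev_induct)
  case Nil
  then show ?case
    by (simp add: yes_count_Nil savings_learner_def)
next
  case (snoc b u)
  show ?case
  proof (cases "k \<le> yes_count (savings_learner d) u")
    case True
    then show ?thesis
      using snoc by (simp add: reaches_snoc)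
  next
    case False
    with snoc.prems have "savings_learner d (u @ [b])" and "k = yes_count (savings_learner d) u + 1"
      by (auto simp: yes_count_snoc split: if_splits)
    then show ?thesis
      by (simp add: reaches_snoc savings_learner_snoc)
  qed
qed

lemma savings_learner_capital_bound:
  assumes "supermartingale d" and "d [] < 2"
  shows "d u < 2 ^ (yes_count (savings_learner d) u + 1)"
proof (induction u rule: rev_induct)
  case Nil
  then show ?case
    using assms(2) by (simp add: yes_count_Nil savings_learner_def)
next
  case (snoc b u)
  show ?case
  proof (cases "savings_learner d (u @ [b])")
    case True
    have "d (u @ [b]) \<le> 2 * d u"
      using assms(1) by (rule supermartingale_snoc_le)
    also have "\<dots> < 2 * 2 ^ (yes_count (savings_learner d) u + 1)"
      using snoc.IH by (intro ennreal_mult_strict_left_mono) auto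
    also have "\<dots> = 2 ^ (yes_count (savings_learner d) (u @ [b]) + 1)"
      using True by (simp add: yes_count_snoc)
    finally show ?thesis .
  next
    case False
    then have "yes_count (savings_learner d) (u @ [b]) = yes_count (savings_learner d) u"
      by (simp add: yes_count_snoc)
    with False show ?thesis
      by (simp add: savings_learner_snoc not_le)
  qed
qed

lemma measure_condition_savings_learner:
  assumes "supermartingale d" and "d [] \<le> 1"
  shows "measure_condition (savings_learner d)"
  unfolding measure_condition_iff_card
proof (intro allI)
  fix n i :: nat
  show "2 ^ n * card (yes_strings (savings_learner d) n i) \<le> 2 ^ i"
  proof (cases "n = 0")
    case True
    have "card (yes_strings (savings_learner d) n i) \<le> card {v :: bool list. length v = i}"
      by (intro card_mono finite_lists_length) (auto simp: yes_strings_def)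
    with True show ?thesis
      by (simp add: card_lists_length)
  next
    case False
    then have "yes_strings (savings_learner d) n i \<subseteq> {v. length v = i \<and> reaches (2 ^ n) d v}"
      by (auto simp: yes_strings_def intro: reaches_yes_count_savings_learner)
    moreover have "finite {v. length v = i \<and> reaches (2 ^ n) d v}"
      by (rule finite_subset[OF _ finite_lists_length[of i]]) auto
    ultimately have "of_nat (card (yes_strings (savings_learner d) n i)) * (2 ^ n :: ennreal)
        \<le> of_nat (card {v. length v = i \<and> reaches (2 ^ n) d v}) * 2 ^ n"
      by (intro mult_right_mono) (simp_all add: card_mono)
    also have "\<dots> \<le> 2 ^ i * d []"
      using assms(1) by (rule ville_inequality)
    also have "\<dots> \<le> 2 ^ i"
      using assms(2) mult_left_mono[of "d []" 1 "2 ^ i"] by simp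
    finally have "of_nat (2 ^ n * card (yes_strings (savings_learner d) n i)) \<le> (of_nat (2 ^ i) :: ennreal)"
      by (simp add: mult.commute)
    then show ?thesis
      by (simp only: of_nat_le_iff)
  qed
qed

lemma yes_count_savings_learner_gt:
  assumes "supermartingale d" and "d [] \<le> 1" and "ennreal (2 powr x) \<le> d u"
  shows "x < real (yes_count (savings_learner d) u) + 1"
proof -
  let ?k = "yes_count (savings_learner d) u"
  have "d [] < 2"
    using assms(2) by (simp add: le_less_trans)
  with assms have "ennreal (2 powr x) < 2 ^ (?k + 1)"
    using savings_learner_capital_bound by (blast intro: le_less_trans)
  also have "(2 :: ennreal) ^ (?k + 1) = ennreal (2 powr real (?k + 1))"
    using powr_realpow[of 2 "?k + 1"] by (simp only: ennreal_power_two)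
  finally show ?thesis
    by (simp add: ennreal_less_iff)
qed

lemma limsup_AVG_savings_learner:
  assumes d: "supermartingale d" "d [] \<le> 1"
    and success: "\<exists>\<^sub>F N in sequentially. ennreal (2 powr ((1 - t) * real N)) \<le> d (pref X N)"
  shows "ereal (1 - t) \<le> limsup (\<lambda>N. ereal (AVG (savings_learner d) (pref X N)))"
  unfolding ereal_le_Limsup_iff
proof (intro allI impI)
  fix e :: real
  assume "0 < e"
  obtain M :: nat where M: "1 / e < real M"
    using reals_Archimedean2 by blast
  have avg: "(1 - t) - e < AVG (savings_learner d) (pref X N)"
    if capital: "ennreal (2 powr ((1 - t) * real N)) \<le> d (pref X N)" and "M \<le> N" for N
  proof -
    have "1 / e < real N"
      using M \<open>M \<le> N\<close> by linarith
    with \<open>0 < e\<close> have "1 < e * real N"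
      by (simp add: field_simps)
    then have "0 < real N"
      by (cases "N = 0") auto
    have "(1 - t) * real N < real (yes_count (savings_learner d) (pref X N)) + 1"
      using yes_count_savings_learner_gt[OF d capital] .
    moreover have "(1 - t - e) * real N = (1 - t) * real N - e * real N"
      by (simp add: algebra_simps)
    ultimately have "(1 - t - e) * real N < real (yes_count (savings_learner d) (pref X N))"
      using \<open>1 < e * real N\<close> by linarith
    with \<open>0 < real N\<close> show ?thesis
      by (simp add: AVG_eq_yes_count pos_less_divide_eq)
  qed
  have "\<forall>\<^sub>F N in sequentially. ennreal (2 powr ((1 - t) * real N)) \<le> d (pref X N) \<longrightarrow>
      (1 - t) - e < AVG (savings_learner d) (pref X N)"
    using eventually_ge_at_top[of M] by (rule eventually_mono) (simp add: avg)
  then show "\<exists>\<^sub>F N in sequentially. (1 - t) - e < AVG (savings_learner d) (pref X N)"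
    using success by (rule frequently_mp)
qed

section \<open>Hausdorff-null sets are learnable\<close>

definition cond_prob :: "(nat \<Rightarrow> bool) set \<Rightarrow> bool list \<Rightarrow> ennreal" where
  "cond_prob A u = 2 ^ length u * emeasure unif (cyl u \<inter> A)"

lemma supermartingale_cond_prob:
  assumes "A \<in> sets unif"
  shows "supermartingale (cond_prob A)"
  unfolding supermartingale_def
proof
  fix u
  have "cyl u \<inter> A = (cyl (u @ [True]) \<inter> A) \<union> (cyl (u @ [False]) \<inter> A)"
    by (auto simp: mem_cyl_snoc)
  moreover have "(cyl (u @ [True]) \<inter> A) \<inter> (cyl (u @ [False]) \<inter> A) = {}"
    by (auto simp: mem_cyl_snoc)
  ultimately have "emeasure unif (cyl (u @ [True]) \<inter> A) + emeasure unif (cyl (u @ [False]) \<inter> A) =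
      emeasure unif (cyl u \<inter> A)"
    using assms by (simp add: plus_emeasure sets.Int)
  then show "cond_prob A (u @ [True]) + cond_prob A (u @ [False]) \<le> 2 * cond_prob A u"
    by (simp add: cond_prob_def distrib_left[symmetric] mult_ac)
qed

definition cyl_martingale :: "real \<Rightarrow> bool list \<Rightarrow> bool list \<Rightarrow> ennreal" where
  "cyl_martingale t w u = ennreal (2 powr ((1 - t) * real (length w))) * cond_prob (cyl w) u"

lemma supermartingale_cyl_martingale: "supermartingale (cyl_martingale t w)"
  unfolding cyl_martingale_def by (intro supermartingale_cmult supermartingale_cond_prob sets_cyl)

lemma cyl_martingale_Nil: "cyl_martingale t w [] = ennreal (2 powr (- t * real (length w)))"
proof -
  have "cyl_martingale t w [] = ennreal (2 powr ((1 - t) * real (length w)) * 2 powr (- real (length w)))"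
    by (simp add: cyl_martingale_def cond_prob_def emeasure_cyl powr_two_minus ennreal_mult del: ennreal_half)
  also have "\<dots> = ennreal (2 powr (- t * real (length w)))"
    by (simp add: powr_add[symmetric] algebra_simps)
  finally show ?thesis .
qed

lemma cyl_martingale_self: "cyl_martingale t w w = ennreal (2 powr ((1 - t) * real (length w)))"
proof -
  have "cond_prob (cyl w) w = ennreal (2 ^ length w * (1/2) ^ length w)"
    by (simp add: cond_prob_def emeasure_cyl ennreal_mult ennreal_power_two del: ennreal_half)
  then show ?thesis
    by (simp add: cyl_martingale_def power_mult_distrib[symmetric])
qed

lemma suminf_cyl_martingale_ge:
  "ennreal (2 powr ((1 - t) * real (length (W m k)))) \<le> (\<Sum>m'. \<Sum>k'. cyl_martingale t (W m' k') (W m k))"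
proof -
  have "ennreal (2 powr ((1 - t) * real (length (W m k)))) = cyl_martingale t (W m k) (W m k)"
    by (simp add: cyl_martingale_self)
  also have "\<dots> \<le> (\<Sum>k'. cyl_martingale t (W m k') (W m k))"
    by (rule ennreal_le_suminf)
  also have "\<dots> \<le> (\<Sum>m'. \<Sum>k'. cyl_martingale t (W m' k') (W m k))"
    by (rule ennreal_le_suminf)
  finally show ?thesis .
qed

lemma hausdorff_null_cover:
  assumes "hausdorff_measure s \<Gamma> = 0" and "0 < \<epsilon>"
  shows "\<exists>W. (\<forall>k. n \<le> length (W k)) \<and> \<Gamma> \<subseteq> (\<Union>k. cyl (W k)) \<and>
    (\<Sum>k. ennreal (2 powr (- s * real (length (W k))))) < \<epsilon>"
proof -
  have "hausdorff_pre s n \<Gamma> = 0"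
    using assms(1) unfolding hausdorff_measure_def by (metis SUP_upper UNIV_I le_zero_eq)
  with assms(2) have "hausdorff_pre s n \<Gamma> < \<epsilon>"
    by simp
  then show ?thesis
    by (auto simp: hausdorff_pre_def INF_less_iff)
qed

lemma supermartingale_succeeds_on_hausdorff_null:
  assumes "hausdorff_measure t \<Gamma> = 0"
  obtains d where "supermartingale d" and "d [] \<le> 1"
    and "\<And>X. X \<in> \<Gamma> \<Longrightarrow> \<exists>\<^sub>F N in sequentially. ennreal (2 powr ((1 - t) * real N)) \<le> d (pref X N)"
proof -
  have "\<exists>W. (\<forall>k. m \<le> length (W k)) \<and> \<Gamma> \<subseteq> (\<Union>k. cyl (W k)) \<and>
      (\<Sum>k. ennreal (2 powr (- t * real (length (W k))))) < ennreal ((1/2) ^ (m + 1))" for m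
    by (rule hausdorff_null_cover[OF assms]) simp
  then obtain W where W: "\<And>m k. m \<le> length (W m k)" "\<And>m. \<Gamma> \<subseteq> (\<Union>k. cyl (W m k))"
    "\<And>m. (\<Sum>k. ennreal (2 powr (- t * real (length (W m k))))) < ennreal ((1/2) ^ (m + 1))"
    by metis
  define d where "d u = (\<Sum>m. \<Sum>k. cyl_martingale t (W m k) u)" for u
  have "supermartingale d"
    unfolding d_def by (intro supermartingale_suminf supermartingale_cyl_martingale)
  moreover have "d [] \<le> 1"
  proof -
    have "d [] = (\<Sum>m. \<Sum>k. ennreal (2 powr (- t * real (length (W m k)))))"
      by (simp add: d_def cyl_martingale_Nil)
    also have "\<dots> \<le> (\<Sum>m. ennreal ((1/2) ^ (m + 1)))"
      using W(3) by (intro suminf_le summableI less_imp_le)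
    also have "\<dots> = ennreal ((1/2) ^ 1 / (1 - 1/2))"
      by (rule suminf_ennreal_geometric) simp_all
    finally show ?thesis
      by simp
  qed
  moreover have "\<exists>\<^sub>F N in sequentially. ennreal (2 powr ((1 - t) * real N)) \<le> d (pref X N)"
    if "X \<in> \<Gamma>" for X
    unfolding frequently_sequentially
  proof
    fix m
    obtain k where "X \<in> cyl (W m k)"
      using W(2) \<open>X \<in> \<Gamma>\<close> by blast
    then have pref: "pref X (length (W m k)) = W m k"
      by (simp add: cyl_def)
    have "ennreal (2 powr ((1 - t) * real (length (W m k)))) \<le> d (W m k)"
      unfolding d_def by (rule suminf_cyl_martingale_ge)
    then show "\<exists>N\<ge>m. ennreal (2 powr ((1 - t) * real N)) \<le> d (pref X N)"
      using W(1)[of m k] pref by (intro exI[of _ "length (W m k)"]) simp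
  qed
  ultimately show ?thesis
    using that by blast
qed

lemma measure_condition_never: "measure_condition (\<lambda>_. False)"
proof -
  have "yes_strings (\<lambda>_. False) n i = (if n = 0 then {v. length v = i} else {})" for n i
    by (auto simp: yes_strings_def yes_count_def)
  then show ?thesis
    by (simp add: measure_condition_iff_card card_lists_length)
qed

lemma learnset_iff:
  "s \<in> learnset \<Gamma> \<longleftrightarrow> 0 < s \<and>
    (\<exists>l. measure_condition l \<and> (\<forall>X\<in>\<Gamma>. ereal (1 - s) \<le> limsup (\<lambda>n. ereal (AVG l (pref X n)))))"
  using measure_condition_never unfolding learnset_def learns_def by (cases "\<Gamma> = {}") auto

lemma learnable_if_hausdorff_null:
  assumes "0 < t" and "hausdorff_measure t \<Gamma> = 0"
  shows "t \<in> learnset \<Gamma>"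
proof -
  obtain d where "supermartingale d" "d [] \<le> 1"
    and "\<And>X. X \<in> \<Gamma> \<Longrightarrow> \<exists>\<^sub>F N in sequentially. ennreal (2 powr ((1 - t) * real N)) \<le> d (pref X N)"
    using supermartingale_succeeds_on_hausdorff_null[OF assms(2)] by blast
  with assms(1) show ?thesis
    unfolding learnset_iff by (blast intro: measure_condition_savings_learner limsup_AVG_savings_learner)
qed

section \<open>Learnable sets are Hausdorff-null\<close>

lemma card_dense_strings_le:
  assumes "measure_condition l"
  shows "real (card {v. length v = L \<and> (1 - r) * real L \<le> real (yes_count l v)}) \<le> 2 powr (r * real L)"
    (is "real (card ?S) \<le> _")
proof -
  define k where "k = nat \<lceil>(1 - r) * real L\<rceil>"
  have "?S \<subseteq> yes_strings l k L"
    by (auto simp: yes_strings_def k_def)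
  then have "card ?S \<le> card (yes_strings l k L)"
    by (intro card_mono finite_yes_strings)
  moreover have "2 ^ k * card (yes_strings l k L) \<le> 2 ^ L"
    using assms by (simp add: measure_condition_iff_card)
  ultimately have "2 ^ k * card ?S \<le> 2 ^ L"
    by (meson mult_le_mono2 order_trans)
  then have "real (2 ^ k * card ?S) \<le> real (2 ^ L)"
    by (simp only: of_nat_le_iff)
  then have "real (card ?S) \<le> 2 powr (real L - real k)"
    by (simp add: powr_diff powr_realpow field_simps)
  also have "\<dots> \<le> 2 powr (r * real L)"
    using real_nat_ceiling_ge[of "(1 - r) * real L"] by (intro powr_mono) (auto simp: k_def algebra_simps)
  finally show ?thesis .
qed

lemma weight_dense_strings_le:
  assumes "measure_condition l"
  shows "(\<Sum>v | length v = L \<and> (1 - r) * real L \<le> real (yes_count l v). ennreal (2 powr (- t * real (length v))))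
    \<le> ennreal ((2 powr (r - t)) ^ L)"
proof -
  have "(\<Sum>v | length v = L \<and> (1 - r) * real L \<le> real (yes_count l v). ennreal (2 powr (- t * real (length v)))) =
      ennreal (real (card {v. length v = L \<and> (1 - r) * real L \<le> real (yes_count l v)}) * 2 powr (- t * real L))"
    by (simp add: ennreal_mult ennreal_of_nat_eq_real_of_nat)
  also have "\<dots> \<le> ennreal (2 powr (r * real L) * 2 powr (- t * real L))"
    using card_dense_strings_le[OF assms] by (intro ennreal_leI mult_right_mono) simp_all
  also have "2 powr (r * real L) * 2 powr (- t * real L) = (2 powr (r - t)) powr real L"
    by (simp add: powr_add[symmetric] powr_powr algebra_simps)
  also have "\<dots> = (2 powr (r - t)) ^ L"
    by (rule powr_realpow) simp
  finally show ?thesis .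
qed

lemma suminf_enumerated_levels:
  fixes g :: "'a \<Rightarrow> ennreal"
  assumes "\<And>N. bij_betw (h N) {..<card (V N)} (V N)"
  shows "(\<Sum>k. case prod_decode k of (N, j) \<Rightarrow> if j < card (V N) then g (h N j) else 0) =
    (\<Sum>N. \<Sum>v\<in>V N. g v)"
proof (rule suminf_ennreal_2dimen)
  fix N
  have "(\<Sum>j. if j < card (V N) then g (h N j) else 0) = (\<Sum>j<card (V N). g (h N j))"
    by (subst suminf_finite[of "{..<card (V N)}"]) auto
  also have "\<dots> = (\<Sum>v\<in>V N. g v)"
    using assms by (rule sum.reindex_bij_betw)
  finally show "(\<Sum>v\<in>V N. g v) = (\<Sum>j. case (N, j) of (N, j) \<Rightarrow> if j < card (V N) then g (h N j) else 0)"
    by simp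
qed

text \<open>Covers in \<open>hausdorff_pre\<close> are sequences. A family of finite levels \<open>V N\<close> becomes one by
  enumerating the pairs \<open>(N, j)\<close>; indices beyond \<open>card (V N)\<close> get all-\<open>False\<close> strings so
  long that their total weight is below any given \<open>e\<close>.\<close>

lemma hausdorff_pre_le_levels:
  fixes V :: "nat \<Rightarrow> bool list set"
  assumes "0 < t" and fin: "\<And>N. finite (V N)" and len: "\<And>N v. v \<in> V N \<Longrightarrow> n \<le> length v"
    and cover: "\<Gamma> \<subseteq> (\<Union>N. \<Union>v\<in>V N. cyl v)"
  shows "hausdorff_pre t n \<Gamma> \<le> (\<Sum>N. \<Sum>v\<in>V N. ennreal (2 powr (- t * real (length v))))"
proof (rule ennreal_le_epsilon)
  fix e :: real
  assume "0 < e"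
  obtain M where M: "(1/2) ^ M < e / 2"
    using real_arch_pow_inv[of "e / 2" "1/2"] \<open>0 < e\<close> by auto
  obtain h where h: "\<And>N. bij_betw (h N) {..<card (V N)} (V N)"
    using ex_bij_betw_nat_finite[OF fin] by (metis atLeast0LessThan)
  define g where "g w = ennreal (2 powr (- t * real (length w)))" for w :: "bool list"
  define pad where "pad k = replicate (n + nat \<lceil>real (k + M) / t\<rceil>) False" for k
  define W where "W k = (case prod_decode k of (N, j) \<Rightarrow> if j < card (V N) then h N j else pad k)" for k
  define listed where "listed k = (case prod_decode k of (N, j) \<Rightarrow> if j < card (V N) then g (h N j) else 0)"
    for k
  have "n \<le> length (W k)" for k
    using len bij_betw_apply[OF h] by (auto simp: W_def pad_def split: prod.split)
  moreover have "\<Gamma> \<subseteq> (\<Union>k. cyl (W k))"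
  proof
    fix X
    assume "X \<in> \<Gamma>"
    then obtain N v where "v \<in> V N" "X \<in> cyl v"
      using cover by blast
    then obtain j where "j < card (V N)" "h N j = v"
      using h[of N] by (metis bij_betw_iff_bijections lessThan_iff)
    with \<open>X \<in> cyl v\<close> have "X \<in> cyl (W (prod_encode (N, j)))"
      by (simp add: W_def)
    then show "X \<in> (\<Union>k. cyl (W k))"
      by blast
  qed
  ultimately have "hausdorff_pre t n \<Gamma> \<le> (\<Sum>k. g (W k))"
    unfolding hausdorff_pre_def g_def by (intro INF_lower) auto
  also have "\<dots> \<le> (\<Sum>k. listed k + ennreal ((1/2) ^ (k + M)))"
  proof (intro suminf_le summableI)
    fix k
    have "real (k + M) / t \<le> real (length (pad k))"
      using real_nat_ceiling_ge[of "real (k + M) / t"] by (simp add: pad_def)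
    then have "g (pad k) \<le> ennreal ((1/2) ^ (k + M))"
      unfolding g_def using \<open>0 < t\<close> by (intro ennreal_leI two_powr_neg_le_half_power)
    then show "g (W k) \<le> listed k + ennreal ((1/2) ^ (k + M))"
      by (auto simp: W_def listed_def add_increasing split: prod.split)
  qed
  also have "\<dots> = (\<Sum>k. listed k) + (\<Sum>k. ennreal ((1/2) ^ (k + M)))"
    by (rule suminf_add[symmetric]) (auto intro: summableI)
  also have "(\<Sum>k. listed k) = (\<Sum>N. \<Sum>v\<in>V N. g v)"
    unfolding listed_def by (rule suminf_enumerated_levels[OF h])
  also have "(\<Sum>k. ennreal ((1/2) ^ (k + M))) = ennreal ((1/2) ^ M / (1 - 1/2))"
    by (rule suminf_ennreal_geometric) simp_all
  also have "\<dots> \<le> ennreal e"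
    using M by (intro ennreal_leI) simp
  finally show "hausdorff_pre t n \<Gamma> \<le> (\<Sum>N. \<Sum>v\<in>V N. ennreal (2 powr (- t * real (length v)))) + ennreal e"
    by (simp add: g_def add_mono)
qed

lemma hausdorff_pre_le_dense_strings:
  assumes mc: "measure_condition l" and "r < t" and "0 < t" and "n \<le> M"
    and dense: "\<And>X. X \<in> \<Gamma> \<Longrightarrow> \<exists>\<^sub>F N in sequentially. (1 - r) * real N \<le> real (yes_count l (pref X N))"
  shows "hausdorff_pre t n \<Gamma> \<le> ennreal ((2 powr (r - t)) ^ M / (1 - 2 powr (r - t)))"
proof -
  define V where "V N = {v. length v = N + M \<and> (1 - r) * real (N + M) \<le> real (yes_count l v)}" for N
  have "hausdorff_pre t n \<Gamma> \<le> (\<Sum>N. \<Sum>v\<in>V N. ennreal (2 powr (- t * real (length v))))"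
  proof (rule hausdorff_pre_le_levels[OF \<open>0 < t\<close>])
    show "finite (V N)" for N
      by (rule finite_subset[OF _ finite_lists_length]) (auto simp: V_def)
    show "n \<le> length v" if "v \<in> V N" for N v
      using that \<open>n \<le> M\<close> by (simp add: V_def)
    show "\<Gamma> \<subseteq> (\<Union>N. \<Union>v\<in>V N. cyl v)"
    proof
      fix X
      assume "X \<in> \<Gamma>"
      then obtain N where "M \<le> N" "(1 - r) * real N \<le> real (yes_count l (pref X N))"
        using dense unfolding frequently_sequentially by blast
      then have "pref X N \<in> V (N - M)"
        by (simp add: V_def)
      then show "X \<in> (\<Union>N. \<Union>v\<in>V N. cyl v)"
        using mem_cyl_pref by blast
    qed
  qed
  also have "\<dots> \<le> (\<Sum>N. ennreal ((2 powr (r - t)) ^ (N + M)))"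
    unfolding V_def by (intro suminf_le summableI weight_dense_strings_le[OF mc])
  also have "\<dots> = ennreal ((2 powr (r - t)) ^ M / (1 - 2 powr (r - t)))"
    using \<open>r < t\<close> by (intro suminf_ennreal_geometric) (auto simp: powr_less_one)
  finally show ?thesis .
qed

lemma hausdorff_null_if_frequently_dense:
  assumes "measure_condition l" and "r < t" and "0 < t"
    and "\<And>X. X \<in> \<Gamma> \<Longrightarrow> \<exists>\<^sub>F N in sequentially. (1 - r) * real N \<le> real (yes_count l (pref X N))"
  shows "hausdorff_measure t \<Gamma> = 0"
proof -
  define q where "q = 2 powr (r - t)"
  have "0 \<le> q" and "q < 1"
    using \<open>r < t\<close> by (auto simp: q_def powr_less_one)
  have "hausdorff_pre t n \<Gamma> = 0" for n
  proof -
    have "(\<lambda>M. 1 / (1 - q) * q ^ M) \<longlonglongrightarrow> 0"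
      using \<open>0 \<le> q\<close> \<open>q < 1\<close> by (intro tendsto_mult_right_zero LIMSEQ_power_zero) simp
    then have "(\<lambda>M. ennreal (q ^ M / (1 - q))) \<longlonglongrightarrow> ennreal 0"
      by (intro tendsto_ennrealI) simp
    moreover have "\<forall>M\<ge>n. hausdorff_pre t n \<Gamma> \<le> ennreal (q ^ M / (1 - q))"
      using assms unfolding q_def by (blast intro: hausdorff_pre_le_dense_strings)
    ultimately have "hausdorff_pre t n \<Gamma> \<le> ennreal 0"
      by (intro LIMSEQ_le_const) auto
    then show ?thesis
      by simp
  qed
  then show ?thesis
    by (simp add: hausdorff_measure_def)
qed

lemma hausdorff_null_if_learnable:
  assumes "s \<in> learnset \<Gamma>" and "s < t"
  shows "hausdorff_measure t \<Gamma> = 0"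
proof -
  obtain l where "0 < s" and mc: "measure_condition l"
    and lim: "\<And>X. X \<in> \<Gamma> \<Longrightarrow> ereal (1 - s) \<le> limsup (\<lambda>n. ereal (AVG l (pref X n)))"
    using assms(1) unfolding learnset_iff by blast
  define r where "r = (s + t) / 2"
  have "s < r" "r < t"
    using assms(2) by (auto simp: r_def)
  have "\<exists>\<^sub>F N in sequentially. (1 - r) * real N \<le> real (yes_count l (pref X N))" if "X \<in> \<Gamma>" for X
  proof -
    have "\<exists>\<^sub>F N in sequentially. (1 - s) - (r - s) < AVG l (pref X N)"
      using ereal_le_Limsup_iff[THEN iffD1, OF lim[OF that], rule_format, of "r - s"] \<open>s < r\<close> by simp
    then show ?thesis
    proof (rule frequently_elim1)
      fix N
      assume "(1 - s) - (r - s) < AVG l (pref X N)"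
      then show "(1 - r) * real N \<le> real (yes_count l (pref X N))"
        by (cases "N = 0") (auto simp: AVG_eq_yes_count field_simps)
    qed
  qed
  with mc \<open>r < t\<close> \<open>0 < s\<close> assms(2) show ?thesis
    by (intro hausdorff_null_if_frequently_dense) auto
qed

section \<open>The two infima\<close>

lemma hausdorff_pre_antimono:
  assumes "s \<le> t"
  shows "hausdorff_pre t n \<Gamma> \<le> hausdorff_pre s n \<Gamma>"
  unfolding hausdorff_pre_def
proof (rule INF_mono)
  fix W :: "nat \<Rightarrow> bool list"
  assume "W \<in> {W. (\<forall>k. n \<le> length (W k)) \<and> \<Gamma> \<subseteq> (\<Union>k. cyl (W k))}"
  moreover have "(\<Sum>k. ennreal (2 powr (- t * real (length (W k))))) \<le>
      (\<Sum>k. ennreal (2 powr (- s * real (length (W k)))))"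
    using assms by (intro suminf_le summableI ennreal_leI powr_mono mult_right_mono) auto
  ultimately show "\<exists>W'\<in>{W. (\<forall>k. n \<le> length (W k)) \<and> \<Gamma> \<subseteq> (\<Union>k. cyl (W k))}.
      (\<Sum>k. ennreal (2 powr (- t * real (length (W' k))))) \<le> (\<Sum>k. ennreal (2 powr (- s * real (length (W k)))))"
    by blast
qed

lemma hausdorff_null_mono:
  assumes "hausdorff_measure s \<Gamma> = 0" and "s \<le> t"
  shows "hausdorff_measure t \<Gamma> = 0"
proof -
  have "hausdorff_measure t \<Gamma> \<le> hausdorff_measure s \<Gamma>"
    unfolding hausdorff_measure_def using assms(2) by (intro SUP_mono) (auto intro: hausdorff_pre_antimono)
  with assms(1) show ?thesis
    by simp
qed

lemma one_mem_learnset: "1 \<in> learnset \<Gamma>"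
  unfolding learnset_iff using measure_condition_never
  by (auto simp: AVG_def Limsup_const intro!: exI[of _ "\<lambda>_. False"])

theorem mainTheorem6:
  fixes \<Gamma> :: "(nat \<Rightarrow> bool) set"
  shows "dimH \<Gamma> = Inf (learnset \<Gamma>)"
proof -
  define H where "H = {s. 0 \<le> s \<and> hausdorff_measure s \<Gamma> = 0}"
  have learnset_H: "t \<in> H" if "s \<in> learnset \<Gamma>" and "s < t" for s t
    using that hausdorff_null_if_learnable[OF that] by (auto simp: H_def learnset_def)
  have H_learnset: "t \<in> learnset \<Gamma>" if "s \<in> H" and "s < t" for s t
    using that learnable_if_hausdorff_null[of t \<Gamma>] hausdorff_null_mono[of s \<Gamma> t] by (auto simp: H_def)
  have "1 \<in> learnset \<Gamma>"
    by (rule one_mem_learnset)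
  then have "2 \<in> H"
    by (rule learnset_H) simp
  have "bdd_below H" "bdd_below (learnset \<Gamma>)"
    by (auto simp: H_def learnset_def intro: bdd_belowI[of _ 0])
  moreover have "H \<noteq> {}" "learnset \<Gamma> \<noteq> {}"
    using \<open>1 \<in> learnset \<Gamma>\<close> \<open>2 \<in> H\<close> by auto
  ultimately have "Inf H = Inf (learnset \<Gamma>)"
    using learnset_H H_learnset by (intro antisym cInf_le_cInf_if_above_mem)
  then show ?thesis
    by (simp add: dimH_def H_def)
qed

end
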